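(* In any execution of Algorithm A, if a process $p_i$ writes a quadruplet $Y$ into some register of $\mathit{REG}$, and $\mathit{view}$ is the array returned by the last snapshot $p_i$ took before this write, then $Y\sqsupseteq X$ for every entry $X$ of $\mathit{view}$.
   Context: Quadruplets, lexicographic order: a quadruplet is $\langle rd,\mathit{lvl},\mathit{cfl},\mathit{val}\rangle$ with $rd\in\mathbb{N}$, $\mathit{lvl}\in\{\mathtt{down}<\mathtt{up}\}$, $\mathit{cfl}\in\{\mathtt{false}<\mathtt{true}\}$, $\mathit{val}$ in a totally ordered value set with a least default $\bot$; quadruplets are totally ordered lexicographically. $X \sqsupset Y$ iff $(X>Y)\wedge[(X.rd>Y.rd)\vee X.\mathit{cfl} \vee (\neg Y.\mathit{cfl}\wedge X.\mathit{val}=Y.\mathit{val})]$; $X\sqsupseteq Y$ iff $X\sqsupset Y$ or $X=Y$. For a nonempty finite set $T$ of quadruplets with lexicographic maximum $\langle r,\ell,c,v\rangle$, $\mathrm{sup}(T)=\langle r,\ell,\mathit{conflict}(T),v\rangle$ where $\mathit{conflict}(T)$ holds iff some element of $T$ of round $r$ has conflict field $\mathtt{true}$, or the elements of $T$ of round $r$ carry at least two distinct values. Model and Algorithm A: $n$ anonymous asynchronous processes (any number may crash) share an atomic snapshot object $\mathit{REG}[1..m]$ (here $m=n$) of multi-writer registers, each initially $\langle 0,\mathtt{down},\mathtt{false},\bot\rangle$, with atomic operations $\mathrm{snapshot}()$ (returns the whole array) and $\mathrm{write}(x,X)$. A process proposing $v$ repeats forever: $\mathit{view}\leftarrow\mathrm{snapshot}()$;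 then (1) if all entries equal $\langle r,\mathtt{up},\mathtt{false},w\rangle$ with $r>0$, it returns (decides) $w$; (2) else if all entries equal $\langle r,\mathtt{down},\mathtt{false},w\rangle$ with $r>0$, it writes $\langle r+1,\mathtt{up},\mathtt{false},w\rangle$ into $\mathit{REG}[1]$; (3) else if all entries equal $\langle r,\ell,\mathtt{true},w\rangle$ with $r>0$, it writes $\langle r+1,\mathtt{down},\mathtt{false},w\rangle$ into $\mathit{REG}[1]$; (4) otherwise it computes $S=\mathrm{sup}(\{\mathit{view}[1],\dots,\mathit{view}[m],\langle 1,\mathtt{down},\mathtt{false},v\rangle\})$, lets $x$ be the smallest index with $\mathit{view}[x]\neq S$, and writes $S$ into $\mathit{REG}[x]$. *)

theory Defs
  imports Main "HOL-Library.Product_Lexorder"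
begin

text \<open>The level is encoded as a boolean
  with down = False < up = True; the lexicographic order on the tuple type is
  the one provided by Product_Lexorder. The least default value is bot.\<close>

type_synonym 'v quad = "nat \<times> bool \<times> bool \<times> 'v"

abbreviation down :: bool where "down \<equiv> False"
abbreviation up :: bool where "up \<equiv> True"

definition rd :: "'v quad \<Rightarrow> nat" where "rd X = fst X"
definition lvl :: "'v quad \<Rightarrow> bool" where "lvl X = fst (snd X)"
definition cfl :: "'v quad \<Rightarrow> bool" where "cfl X = fst (snd (snd X))"
definition val :: "'v quad \<Rightarrow> 'v" where "val X = snd (snd (snd X))"

definition sqsupset :: "('v::linorder) quad \<Rightarrow> 'v quad \<Rightarrow> bool" where
  "sqsupset X Y \<longleftrightarrow> X > Y \<and> (rd X > rd Y \<or> cfl X \<or> (\<not> cfl Y \<and> val X = val Y))"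

definition sqsupseteq :: "('v::linorder) quad \<Rightarrow> 'v quad \<Rightarrow> bool" where
  "sqsupseteq X Y \<longleftrightarrow> sqsupset X Y \<or> X = Y"

definition conflict :: "('v::linorder) quad set \<Rightarrow> bool" where
  "conflict T \<longleftrightarrow>
     (let r = rd (Max T) in
       (\<exists>X\<in>T. rd X = r \<and> cfl X) \<or>
       (\<exists>X\<in>T. \<exists>Y\<in>T. rd X = r \<and> rd Y = r \<and> val X \<noteq> val Y))"

definition quad_sup :: "('v::linorder) quad set \<Rightarrow> 'v quad" where
  "quad_sup T = (rd (Max T), lvl (Max T), conflict T, val (Max T))"

text \<open>Registers REG[1..n] (m = n) are modelled as functions on nat, only
  indices in {1..n} being meaningful.\<close>

datatype 'v action = Decide 'v | WriteReg nat "'v quad"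

definition all_eq :: "nat \<Rightarrow> (nat \<Rightarrow> 'v quad) \<Rightarrow> 'v quad \<Rightarrow> bool" where
  "all_eq n view X \<longleftrightarrow> (\<forall>k\<in>{1..n}. view k = X)"

definition alg_action :: "nat \<Rightarrow> (nat \<Rightarrow> ('v::linorder) quad) \<Rightarrow> 'v \<Rightarrow> 'v action" where
  "alg_action n view v =
    (if \<exists>r w. r > 0 \<and> all_eq n view (r, up, False, w)
     then Decide (SOME w. \<exists>r. r > 0 \<and> all_eq n view (r, up, False, w))
     else if \<exists>r w. r > 0 \<and> all_eq n view (r, down, False, w)
     then (let (r, w) = (SOME (r, w). r > 0 \<and> all_eq n view (r, down, False, w))
           in WriteReg 1 (r + 1, up, False, w))
     else if \<exists>r l w. r > 0 \<and> all_eq n view (r, l, True, w)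
     then (let (r, l, w) = (SOME (r, l, w). r > 0 \<and> all_eq n view (r, l, True, w))
           in WriteReg 1 (r + 1, down, False, w))
     else (let S = quad_sup (insert (1, down, False, v) (view ` {1..n}))
           in WriteReg (LEAST x. x \<in> {1..n} \<and> view x \<noteq> S) S))"

text \<open>Local state of a process: about to take a snapshot, holding the view
  returned by its last snapshot (about to act on it), or decided.\<close>
datatype 'v local = Idle | Viewed "nat \<Rightarrow> 'v quad" | Decided 'v

record 'v config =
  reg :: "nat \<Rightarrow> 'v quad"
  loc :: "nat \<Rightarrow> 'v local"

definition init_config :: "('v::bot) config" where
  "init_config = \<lparr> reg = (\<lambda>_. (0, down, False, bot)), loc = (\<lambda>_. Idle) \<rparr>"

text \<open>Reachable configurations for n processes, process i proposing props i.
  Asynchrony and crashes: any process may take a step at any time; a crashed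
  process simply takes no more steps.\<close>
inductive reachable :: "nat \<Rightarrow> (nat \<Rightarrow> ('v::{linorder,order_bot})) \<Rightarrow> 'v config \<Rightarrow> bool"
  for n :: nat and props :: "nat \<Rightarrow> 'v" where
  init: "reachable n props init_config"
| snap: "\<lbrakk> reachable n props c; i \<in> {1..n}; loc c i = Idle \<rbrakk> \<Longrightarrow>
     reachable n props (c\<lparr> loc := (loc c)(i := Viewed (reg c)) \<rparr>)"
| decide: "\<lbrakk> reachable n props c; i \<in> {1..n}; loc c i = Viewed view;
     alg_action n view (props i) = Decide w \<rbrakk> \<Longrightarrow>
     reachable n props (c\<lparr> loc := (loc c)(i := Decided w) \<rparr>)"
| wr: "\<lbrakk> reachable n props c; i \<in> {1..n}; loc c i = Viewed view;
     alg_action n view (props i) = WriteReg x Y \<rbrakk> \<Longrightarrow>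
     reachable n props (c\<lparr> reg := (reg c)(x := Y), loc := (loc c)(i := Idle) \<rparr>)"

end

theory Submission
  imports Defs
begin

text \<open>A write either comes from rule (2) or (3), which act on a view whose entries all
  equal one quadruplet and write a quadruplet of the next round, or from rule (4), which
  writes the supremum of the view; a later round always dominates, and the supremum
  dominates each of its arguments.\<close>

lemma sqsupset_if_rd_less:
  fixes X Y :: "('v::linorder) quad"
  assumes "rd X < rd Y"
  shows "sqsupset Y X"
  using assms by (cases X, cases Y) (simp add: sqsupset_def rd_def less_prod_def)

lemma quad_sup_sqsupseteq:
  fixes T :: "('v::linorder) quad set"
  assumes "finite T" and "X \<in> T"
  shows "sqsupseteq (quad_sup T) X"
proof -
  have "X \<le> Max T" and "Max T \<in> T"
    using assms by (auto intro: Max_in)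
  obtain r l cf v where M: "Max T = (r, l, cf, v)"
    by (cases "Max T") auto
  obtain a b c d where X: "X = (a, b, c, d)"
    by (cases X) auto
  consider "a < r" | "a = r" "conflict T" | "a = r" "\<not> conflict T"
    using \<open>X \<le> Max T\<close> M X by (fastforce simp: less_eq_prod_def)
  then show ?thesis
  proof cases
    case 1
    then show ?thesis
      using M X sqsupset_if_rd_less[of X "quad_sup T"]
      by (simp add: sqsupseteq_def quad_sup_def rd_def)
  next
    case 2
    then show ?thesis
      using M X \<open>X \<le> Max T\<close>
      by (auto simp: sqsupseteq_def sqsupset_def quad_sup_def rd_def lvl_def cfl_def val_def
          less_eq_prod_def less_prod_def)
  next
    case 3
    \<comment> \<open>Without a conflict, every quadruplet of the top round shares the value of Max T and
      carries no conflict flag, so X and the supremum can only differ in the level.\<close>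
    then have "\<not> c" "d = v" "\<not> cf"
      using assms \<open>Max T \<in> T\<close> M X
      unfolding conflict_def Let_def rd_def cfl_def val_def by force+
    then show ?thesis
      using 3 M X \<open>X \<le> Max T\<close>
      by (auto simp: sqsupseteq_def sqsupset_def quad_sup_def rd_def lvl_def cfl_def val_def
          less_eq_prod_def less_prod_def)
  qed
qed

lemma alg_action_WriteReg_cases:
  fixes view :: "nat \<Rightarrow> ('v::linorder) quad"
  assumes "alg_action n view v = WriteReg x Y"
  obtains X where "all_eq n view X" and "rd X < rd Y"
  | "Y = quad_sup (insert (1, down, False, v) (view ` {1..n}))"
proof -
  consider
      (up) "\<exists>r w. r > 0 \<and> all_eq n view (r, up, False, w)"
    | (down) "\<not> (\<exists>r w. r > 0 \<and> all_eq n view (r, up, False, w))"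
        "\<exists>r w. r > 0 \<and> all_eq n view (r, down, False, w)"
    | (conflict) "\<not> (\<exists>r w. r > 0 \<and> all_eq n view (r, up, False, w))"
        "\<not> (\<exists>r w. r > 0 \<and> all_eq n view (r, down, False, w))"
        "\<exists>r l w. r > 0 \<and> all_eq n view (r, l, True, w)"
    | (sup) "\<not> (\<exists>r w. r > 0 \<and> all_eq n view (r, up, False, w))"
        "\<not> (\<exists>r w. r > 0 \<and> all_eq n view (r, down, False, w))"
        "\<not> (\<exists>r l w. r > 0 \<and> all_eq n view (r, l, True, w))"
    by blast
  then show ?thesis
  proof cases
    case up
    then show ?thesis
      using assms by (simp add: alg_action_def)
  next
    case down
    define p where "p = (SOME (r, w). r > 0 \<and> all_eq n view (r, down, False, w))"
    have "case p of (r, w) \<Rightarrow> r > 0 \<and> all_eq n view (r, down, False, w)"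
      unfolding p_def by (rule someI_ex) (use down(2) in auto)
    then have "all_eq n view (fst p, down, False, snd p)"
      by (simp add: case_prod_beta)
    moreover have "WriteReg x Y = (let (r, w) = p in WriteReg 1 (r + 1, up, False, w))"
      using assms down unfolding alg_action_def p_def by (simp only: if_True if_False)
    then have "Y = (Suc (fst p), up, False, snd p)"
      by (simp add: case_prod_beta)
    ultimately show ?thesis
      using that(1) by (simp add: rd_def)
  next
    case conflict
    define p where "p = (SOME (r, l, w). r > 0 \<and> all_eq n view (r, l, True, w))"
    have "case p of (r, l, w) \<Rightarrow> r > 0 \<and> all_eq n view (r, l, True, w)"
      unfolding p_def by (rule someI_ex) (use conflict(3) in auto)
    then have "all_eq n view (fst p, fst (snd p), True, snd (snd p))"
      by (simp add: case_prod_beta)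
    moreover have "WriteReg x Y = (let (r, l, w) = p in WriteReg 1 (r + 1, down, False, w))"
      using assms conflict unfolding alg_action_def p_def by (simp only: if_True if_False)
    then have "Y = (Suc (fst p), down, False, snd (snd p))"
      by (simp add: case_prod_beta)
    ultimately show ?thesis
      using that(1) by (simp add: rd_def)
  next
    case sup
    then have "WriteReg x Y = (let S = quad_sup (insert (1, down, False, v) (view ` {1..n}))
        in WriteReg (LEAST x. x \<in> {1..n} \<and> view x \<noteq> S) S)"
      using assms unfolding alg_action_def by (simp only: if_True if_False)
    then show ?thesis
      using that(2) by (simp add: Let_def)
  qed
qed

theorem lemma4:
  fixes n :: nat and props :: "nat \<Rightarrow> 'v::{linorder,order_bot}"
    and c :: "'v config" and view :: "nat \<Rightarrow> 'v quad"
  assumes "reachable n props c"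
    and "i \<in> {1..n}"
    and "loc c i = Viewed view"
    and "alg_action n view (props i) = WriteReg x Y"
    and "j \<in> {1..n}"
  shows "sqsupseteq Y (view j)"
  using assms(4)
proof (cases rule: alg_action_WriteReg_cases)
  case (1 X)
  then have "view j = X"
    using assms(5) by (simp add: all_eq_def)
  then show ?thesis
    using sqsupset_if_rd_less[OF \<open>rd X < rd Y\<close>] by (simp add: sqsupseteq_def)
next
  case 2
  moreover have "view j \<in> insert (1, down, False, props i) (view ` {1..n})"
    using assms(5) by blast
  ultimately show ?thesis
    by (simp only: quad_sup_sqsupseteq finite_insert finite_imageI finite_atLeastAtMost)
qed

end
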